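(* If $X'$ is separable in the weak$^*$ topology $\sigma(X',X)$, then every multimeasure $M:\Sigma\to c(X)$ satisfies the countable chain condition.
   Context: $(\Omega,\Sigma)$ is a measurable space and $X$ is a Hausdorff locally convex space with dual $X'$. $c(X)$ is the family of nonempty closed convex subsets of $X$; $s(x',C)=\sup\{\langle x',x\rangle:x\in C\}$. A multimeasure is a map $M:\Sigma\to c(X)$ such that for every $x'\in X'$ the set function $s(x',M(\cdot))$ is a $\sigma$-finite countably additive measure with values in $(-\infty,+\infty]$. $\mathcal N(M)=\{E\in\Sigma:M(E)=\{0\}\}$. $M$ satisfies the countable chain condition if every family of pairwise disjoint sets in $\Sigma\setminus\mathcal N(M)$ is at most countable. *)

theory Defs
  imports "HOL-Analysis.Analysis"
begin

definition tvs_ops_continuous :: "('x::{real_vector, topological_space}) itself \<Rightarrow> bool" where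
  "tvs_ops_continuous _ \<longleftrightarrow>
     continuous_on UNIV (\<lambda>(x::'x, y::'x). x + y) \<and>
     continuous_on UNIV (\<lambda>(a::real, x::'x). a *\<^sub>R x)"

definition locally_convex :: "('x::{real_vector, topological_space}) itself \<Rightarrow> bool" where
  "locally_convex _ \<longleftrightarrow>
     (\<forall>U::'x set. open U \<and> 0 \<in> U \<longrightarrow> (\<exists>V. open V \<and> convex V \<and> 0 \<in> V \<and> V \<subseteq> U))"

definition topdual :: "('x::{real_vector, topological_space} \<Rightarrow> real) set" where
  "topdual = {f. linear f \<and> continuous_on UNIV f}"

text \<open>Weak-star topology sigma(X',X): the topology of pointwise convergence on X',
  i.e. the subspace topology induced by the product topology on X \<Rightarrow> real.\<close>
definition weak_star_topology :: "('x::{real_vector, topological_space} \<Rightarrow> real) topology" where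
  "weak_star_topology = subtopology (powertop_real UNIV) topdual"

definition separable_top :: "'a topology \<Rightarrow> bool" where
  "separable_top T \<longleftrightarrow> (\<exists>D. countable D \<and> D \<subseteq> topspace T \<and> T closure_of D = topspace T)"

definition cX :: "('x::{real_vector, topological_space}) set set" where
  "cX = {C. C \<noteq> {} \<and> closed C \<and> convex C}"

definition supp_fun :: "('x \<Rightarrow> real) \<Rightarrow> 'x set \<Rightarrow> ereal" where
  "supp_fun f C = (SUP x\<in>C. ereal (f x))"

definition sigma_finite_ca_measure :: "'a set \<Rightarrow> 'a set set \<Rightarrow> ('a set \<Rightarrow> ereal) \<Rightarrow> bool" where
  "sigma_finite_ca_measure \<Omega> \<Sigma> \<mu> \<longleftrightarrow>
     (\<forall>E\<in>\<Sigma>. \<mu> E \<noteq> -\<infinity>) \<and>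
     \<mu> {} = 0 \<and>
     (\<forall>A::nat \<Rightarrow> 'a set. range A \<subseteq> \<Sigma> \<longrightarrow> disjoint_family A \<longrightarrow>
         (\<lambda>n. \<mu> (A n)) sums \<mu> (\<Union>n. A n)) \<and>
     (\<exists>B::nat \<Rightarrow> 'a set. range B \<subseteq> \<Sigma> \<and> (\<Union>n. B n) = \<Omega> \<and> (\<forall>n. \<mu> (B n) < \<infinity>))"

definition multimeasure :: "'a set \<Rightarrow> 'a set set \<Rightarrow> ('a set \<Rightarrow> 'x::{real_vector, topological_space} set) \<Rightarrow> bool" where
  "multimeasure \<Omega> \<Sigma> M \<longleftrightarrow>
     (\<forall>E\<in>\<Sigma>. M E \<in> cX) \<and>
     (\<forall>f\<in>topdual. sigma_finite_ca_measure \<Omega> \<Sigma> (\<lambda>E. supp_fun f (M E)))"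

definition null_sets_mm :: "'a set set \<Rightarrow> ('a set \<Rightarrow> 'x::zero set) \<Rightarrow> 'a set set" where
  "null_sets_mm \<Sigma> M = {E\<in>\<Sigma>. M E = {0}}"

definition countable_chain_condition :: "'a set set \<Rightarrow> ('a set \<Rightarrow> 'x::zero set) \<Rightarrow> bool" where
  "countable_chain_condition \<Sigma> M \<longleftrightarrow>
     (\<forall>F. F \<subseteq> \<Sigma> - null_sets_mm \<Sigma> M \<and> disjoint F \<longrightarrow> countable F)"

end

(*
  A nonzero vector x is separated from 0 by a continuous linear functional: Hahn-Banach gives
  a linear functional dominated by the Minkowski functional of a convex open neighbourhood of 0
  missing x and agreeing with it at x, where it is at least 1; being bounded by 1 on that
  neighbourhood, the functional is continuous. Its open weak* neighbourhood {h. h x > 0} meets a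
  countable weak* dense set D, so every non-null E has s(g, M E) > 0 for some g in D. For fixed g,
  the sigma-finite countably additive measure s(g, M(.)) is positive on only countably many
  members of a disjoint family: on each piece of a disjoint cover by sets of finite measure, only
  finitely many members can exceed 1/(m+1).
*)
theory Submission
  imports Defs
begin

section \<open>Hahn-Banach for sublinear functionals\<close>

definition sublinear :: "('x::real_vector \<Rightarrow> real) \<Rightarrow> bool" where
  "sublinear p \<longleftrightarrow>
     (\<forall>u w. p (u + w) \<le> p u + p w) \<and> (\<forall>c v. c > 0 \<longrightarrow> p (c *\<^sub>R v) = c * p v)"

lemma sublinear_zero: "sublinear p \<Longrightarrow> p 0 = 0"
  unfolding sublinear_def by (metis mult_2 scaleR_zero_right add_cancel_right_right zero_less_numeral)

lemma sublinear_scaleR_lower: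
  assumes "sublinear p"
  shows "c * p x \<le> p (c *\<^sub>R x)"
proof -
  consider "c > 0" | "c = 0" | "c < 0" by linarith
  then show ?thesis
  proof cases
    case 1
    then show ?thesis using assms by (simp add: sublinear_def)
  next
    case 2
    then show ?thesis using sublinear_zero[OF assms] by simp
  next
    case 3
    have "0 = p (c *\<^sub>R x + (- c) *\<^sub>R x)" using sublinear_zero[OF assms] by simp
    also have "\<dots> \<le> p (c *\<^sub>R x) + p ((- c) *\<^sub>R x)"
      using assms unfolding sublinear_def by blast
    also have "p ((- c) *\<^sub>R x) = - c * p x"
      using assms 3 unfolding sublinear_def by (metis neg_0_less_iff_less)
    finally show ?thesis by simp
  qed
qed

text \<open>Partial linear functionals are represented by their graphs, so that Zorn's lemma can be
  applied to the inclusion order.\<close>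
definition dominated_linear_graph :: "('x::real_vector \<Rightarrow> real) \<Rightarrow> ('x \<times> real) set \<Rightarrow> bool" where
  "dominated_linear_graph p G \<longleftrightarrow>
     (0, 0) \<in> G \<and>
     (\<forall>v a b. (v, a) \<in> G \<longrightarrow> (v, b) \<in> G \<longrightarrow> a = b) \<and>
     (\<forall>v w a b. (v, a) \<in> G \<longrightarrow> (w, b) \<in> G \<longrightarrow> (v + w, a + b) \<in> G) \<and>
     (\<forall>v a c. (v, a) \<in> G \<longrightarrow> (c *\<^sub>R v, c * a) \<in> G) \<and>
     (\<forall>v a. (v, a) \<in> G \<longrightarrow> a \<le> p v)"

lemma dominated_linear_graph_ray:
  assumes "sublinear p"
  shows "dominated_linear_graph p {(c *\<^sub>R x, c * p x) | c. True}" (is "dominated_linear_graph p ?R")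
  unfolding dominated_linear_graph_def
proof (intro conjI allI impI)
  show "(0, 0) \<in> ?R" by (auto intro!: exI[of _ 0])
next
  fix v a b assume "(v, a) \<in> ?R" "(v, b) \<in> ?R"
  then obtain c d where "v = c *\<^sub>R x" "a = c * p x" "v = d *\<^sub>R x" "b = d * p x" by blast
  then show "a = b" using sublinear_zero[OF assms] by (metis scaleR_cancel_right mult_zero_right)
next
  fix v w a b assume "(v, a) \<in> ?R" "(w, b) \<in> ?R"
  then obtain c d where "v = c *\<^sub>R x" "a = c * p x" "w = d *\<^sub>R x" "b = d * p x" by blast
  then show "(v + w, a + b) \<in> ?R"
    by (auto intro!: exI[of _ "c + d"] simp: scaleR_add_left distrib_right)
next
  fix v a e assume "(v, a) \<in> ?R"
  then obtain d where "v = d *\<^sub>R x" "a = d * p x" by blast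
  then show "(e *\<^sub>R v, e * a) \<in> ?R"
    by (auto intro!: exI[of _ "e * d"])
next
  fix v a assume "(v, a) \<in> ?R"
  then show "a \<le> p v" using sublinear_scaleR_lower[OF assms] by blast
qed

lemma dominated_linear_graph_Union:
  assumes "C \<in> chains {G. dominated_linear_graph p G}" "C \<noteq> {}"
  shows "dominated_linear_graph p (\<Union>C)"
proof -
  have dom: "\<And>G. G \<in> C \<Longrightarrow> dominated_linear_graph p G"
    using chainsD2[OF assms(1)] by auto
  have common: "\<exists>G\<in>C. x \<in> G \<and> y \<in> G" if "x \<in> \<Union>C" "y \<in> \<Union>C" for x y
    using that chainsD[OF assms(1)] by blast
  show ?thesis
    unfolding dominated_linear_graph_def
  proof (intro conjI allI impI)
    show "(0, 0) \<in> \<Union>C" using assms(2) dom unfolding dominated_linear_graph_def by blast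
  next
    fix v a b assume "(v, a) \<in> \<Union>C" "(v, b) \<in> \<Union>C"
    then obtain G where "G \<in> C" "(v, a) \<in> G" "(v, b) \<in> G" using common by blast
    then show "a = b" using dom unfolding dominated_linear_graph_def by blast
  next
    fix v w a b assume "(v, a) \<in> \<Union>C" "(w, b) \<in> \<Union>C"
    then obtain G where "G \<in> C" "(v, a) \<in> G" "(w, b) \<in> G" using common by blast
    then show "(v + w, a + b) \<in> \<Union>C" using dom unfolding dominated_linear_graph_def by blast
  next
    fix v a c assume "(v, a) \<in> \<Union>C"
    then show "(c *\<^sub>R v, c * a) \<in> \<Union>C" using dom unfolding dominated_linear_graph_def by blast
  next
    fix v a assume "(v, a) \<in> \<Union>C"
    then show "a \<le> p v" using dom unfolding dominated_linear_graph_def by blast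
  qed
qed

lemma dominated_linear_graph_extension_value:
  assumes "sublinear p" "dominated_linear_graph p G"
  obtains c where "\<And>u a. (u, a) \<in> G \<Longrightarrow> a - p (u - y) \<le> c"
    and "\<And>w b. (w, b) \<in> G \<Longrightarrow> c \<le> p (w + y) - b"
proof -
  define L where "L = {a - p (u - y) | u a. (u, a) \<in> G}"
  have below: "l \<le> p (w + y) - b" if "l \<in> L" "(w, b) \<in> G" for l w b
  proof -
    obtain u a where ua: "(u, a) \<in> G" "l = a - p (u - y)" using \<open>l \<in> L\<close> L_def by auto
    have "a + b \<le> p (u + w)" using assms(2) ua(1) that(2) unfolding dominated_linear_graph_def by blast
    also have "\<dots> = p ((u - y) + (w + y))" by simp
    also have "\<dots> \<le> p (u - y) + p (w + y)" using assms(1) unfolding sublinear_def by blast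
    finally show ?thesis using ua by simp
  qed
  have zero: "(0, 0) \<in> G" using assms(2) by (simp add: dominated_linear_graph_def)
  then have "L \<noteq> {}" by (auto simp: L_def)
  moreover have "bdd_above L" using below[OF _ zero] by (rule bdd_aboveI)
  ultimately show ?thesis
    using below by (intro that[of "Sup L"] cSup_upper cSup_least) (auto simp: L_def)
qed

lemma dominated_by_extension_value:
  assumes p: "sublinear p" and G: "dominated_linear_graph p G"
    and lower: "\<And>u a. (u, a) \<in> G \<Longrightarrow> a - p (u - y) \<le> c"
    and upper: "\<And>w b. (w, b) \<in> G \<Longrightarrow> c \<le> p (w + y) - b"
    and ub: "(u, b) \<in> G"
  shows "b + t * c \<le> p (u + t *\<^sub>R y)"
proof -
  have scaled: "(r *\<^sub>R u, r * b) \<in> G" for r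
    using G ub unfolding dominated_linear_graph_def by blast
  have hom: "p (r *\<^sub>R v) = r * p v" if "r > 0" for r v
    using p that unfolding sublinear_def by blast
  consider "t > 0" | "t = 0" | "t < 0" by linarith
  then show ?thesis
  proof cases
    case 1
    have "t * c \<le> t * (p (inverse t *\<^sub>R u + y) - inverse t * b)"
      using upper[OF scaled] 1 by (simp add: mult_left_mono)
    also have "\<dots> = t * p (inverse t *\<^sub>R u + y) - b" using 1 by (simp add: right_diff_distrib)
    also have "t * p (inverse t *\<^sub>R u + y) = p (u + t *\<^sub>R y)"
      using hom[OF 1, of "inverse t *\<^sub>R u + y"] 1 by (simp add: scaleR_add_right)
    finally show ?thesis by simp
  next
    case 2
    then show ?thesis using G ub by (simp add: dominated_linear_graph_def)
  next
    case 3
    define s where "s = - t"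
    have s: "s > 0" using 3 by (simp add: s_def)
    have "p (u + t *\<^sub>R y) = s * p (inverse s *\<^sub>R u - y)"
      using hom[OF s, of "inverse s *\<^sub>R u - y"] s by (simp add: scaleR_diff_right s_def)
    moreover have "s * (inverse s * b - p (inverse s *\<^sub>R u - y)) \<le> s * c"
      using lower[OF scaled] s by (simp add: mult_left_mono)
    moreover have "s * (inverse s * b) = b" using s by simp
    ultimately show ?thesis unfolding right_diff_distrib s_def by linarith
  qed
qed

definition adjoin_graph :: "('x::real_vector \<times> real) set \<Rightarrow> 'x \<Rightarrow> real \<Rightarrow> ('x \<times> real) set" where
  "adjoin_graph G y c = {(v + t *\<^sub>R y, a + t * c) | v a t. (v, a) \<in> G}"

lemma adjoin_graph_coordinate_unique:
  assumes G: "dominated_linear_graph p G" and y: "\<nexists>a. (y, a) \<in> G"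
    and "(v, a) \<in> G" "(v', a') \<in> G" "v + t *\<^sub>R y = v' + t' *\<^sub>R y"
  shows "t = t' \<and> v = v'"
proof (rule ccontr)
  have add: "\<And>v w a b. (v, a) \<in> G \<Longrightarrow> (w, b) \<in> G \<Longrightarrow> (v + w, a + b) \<in> G"
    and scale: "\<And>v a r. (v, a) \<in> G \<Longrightarrow> (r *\<^sub>R v, r * a) \<in> G"
    using G unfolding dominated_linear_graph_def by blast+
  assume "\<not> (t = t' \<and> v = v')"
  then have "t \<noteq> t'" using assms(5) by auto
  have "(t - t') *\<^sub>R y = v' + (- 1) *\<^sub>R v" using assms(5) by (simp add: algebra_simps)
  then have "inverse (t - t') *\<^sub>R ((t - t') *\<^sub>R y) = inverse (t - t') *\<^sub>R (v' + (- 1) *\<^sub>R v)"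
    by simp
  then have "y = inverse (t - t') *\<^sub>R (v' + (- 1) *\<^sub>R v)" using \<open>t \<noteq> t'\<close> by simp
  moreover have "(inverse (t - t') *\<^sub>R (v' + (- 1) *\<^sub>R v), inverse (t - t') * (a' + (- 1) * a)) \<in> G"
    by (intro scale add assms(3,4))
  ultimately show False using y by metis
qed

lemma dominated_linear_graph_adjoin:
  assumes p: "sublinear p" and G: "dominated_linear_graph p G" and y: "\<nexists>a. (y, a) \<in> G"
    and lower: "\<And>u a. (u, a) \<in> G \<Longrightarrow> a - p (u - y) \<le> c"
    and upper: "\<And>w b. (w, b) \<in> G \<Longrightarrow> c \<le> p (w + y) - b"
  shows "dominated_linear_graph p (adjoin_graph G y c)"
proof -
  have add: "\<And>v w a b. (v, a) \<in> G \<Longrightarrow> (w, b) \<in> G \<Longrightarrow> (v + w, a + b) \<in> G"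
    and scale: "\<And>v a r. (v, a) \<in> G \<Longrightarrow> (r *\<^sub>R v, r * a) \<in> G"
    and functional: "\<And>v a b. (v, a) \<in> G \<Longrightarrow> (v, b) \<in> G \<Longrightarrow> a = b"
    and zero: "(0, 0) \<in> G"
    using G unfolding dominated_linear_graph_def by blast+
  have adjoinI: "(v + t *\<^sub>R y, a + t * c) \<in> adjoin_graph G y c" if "(v, a) \<in> G" for v a t
    using that unfolding adjoin_graph_def by blast
  show ?thesis
    unfolding dominated_linear_graph_def
  proof (intro conjI allI impI)
    show "(0, 0) \<in> adjoin_graph G y c" using adjoinI[OF zero, of 0] by simp
  next
    fix v a b assume "(v, a) \<in> adjoin_graph G y c" "(v, b) \<in> adjoin_graph G y c"
    then obtain v1 a1 t1 v2 a2 t2 where G12: "(v1, a1) \<in> G" "(v2, a2) \<in> G"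
      and v: "v = v1 + t1 *\<^sub>R y" "v = v2 + t2 *\<^sub>R y"
      and ab: "a = a1 + t1 * c" "b = a2 + t2 * c"
      unfolding adjoin_graph_def by blast
    have "v1 + t1 *\<^sub>R y = v2 + t2 *\<^sub>R y" using v by simp
    from adjoin_graph_coordinate_unique[OF G y G12 this] have "t1 = t2" "v1 = v2" by auto
    then show "a = b" using ab functional[OF G12(1)] G12(2) by simp
  next
    fix v w a b assume "(v, a) \<in> adjoin_graph G y c" "(w, b) \<in> adjoin_graph G y c"
    then obtain v1 a1 t1 v2 a2 t2 where "(v1, a1) \<in> G" "(v2, a2) \<in> G"
      "v = v1 + t1 *\<^sub>R y" "a = a1 + t1 * c" "w = v2 + t2 *\<^sub>R y" "b = a2 + t2 * c"
      unfolding adjoin_graph_def by blast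
    then show "(v + w, a + b) \<in> adjoin_graph G y c"
      using adjoinI[OF add, of v1 a1 v2 a2 "t1 + t2"] by (simp add: algebra_simps)
  next
    fix v a r assume "(v, a) \<in> adjoin_graph G y c"
    then obtain v1 a1 t1 where "(v1, a1) \<in> G" "v = v1 + t1 *\<^sub>R y" "a = a1 + t1 * c"
      unfolding adjoin_graph_def by blast
    then show "(r *\<^sub>R v, r * a) \<in> adjoin_graph G y c"
      using adjoinI[OF scale, of v1 a1 r "r * t1"] by (simp add: algebra_simps)
  next
    fix v a assume "(v, a) \<in> adjoin_graph G y c"
    then obtain u b t where "(u, b) \<in> G" "v = u + t *\<^sub>R y" "a = b + t * c"
      unfolding adjoin_graph_def by blast
    then show "a \<le> p v" using dominated_by_extension_value[OF p G lower upper] by simp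
  qed
qed

lemma dominated_linear_graph_extend:
  assumes p: "sublinear p" and G: "dominated_linear_graph p G" and y: "\<nexists>a. (y, a) \<in> G"
  shows "\<exists>G'. dominated_linear_graph p G' \<and> G \<subset> G'"
proof -
  obtain c where lower: "\<And>u a. (u, a) \<in> G \<Longrightarrow> a - p (u - y) \<le> c"
    and upper: "\<And>w b. (w, b) \<in> G \<Longrightarrow> c \<le> p (w + y) - b"
    using dominated_linear_graph_extension_value[OF p G] by metis
  have adjoinI: "(v + t *\<^sub>R y, a + t * c) \<in> adjoin_graph G y c" if "(v, a) \<in> G" for v a t
    using that unfolding adjoin_graph_def by blast
  have "G \<subseteq> adjoin_graph G y c" using adjoinI[of _ _ 0] by auto
  moreover have "(0, 0) \<in> G" using G by (simp add: dominated_linear_graph_def)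
  then have "(y, c) \<in> adjoin_graph G y c - G" using adjoinI[of 0 0 1] y by auto
  ultimately show ?thesis using dominated_linear_graph_adjoin[OF p G y lower upper] by blast
qed

lemma dominated_linear_graph_maximal:
  assumes p: "sublinear p"
  obtains G where "dominated_linear_graph p G" "(x, p x) \<in> G" "\<And>v. \<exists>a. (v, a) \<in> G"
proof -
  define A where "A = {G. dominated_linear_graph p G \<and> (x, p x) \<in> G}"
  have ray: "{(c *\<^sub>R x, c * p x) | c. True} \<in> A"
    using dominated_linear_graph_ray[OF p] by (auto simp: A_def intro!: exI[of _ 1])
  have "\<exists>G\<in>A. \<forall>G'\<in>A. G \<subseteq> G' \<longrightarrow> G' = G"
  proof (rule Zorn_Lemma2, intro ballI)
    fix C assume C: "C \<in> chains A"
    show "\<exists>U\<in>A. \<forall>G\<in>C. G \<subseteq> U"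
    proof (cases "C = {}")
      case True
      then show ?thesis using ray by blast
    next
      case False
      have "C \<in> chains {G. dominated_linear_graph p G}" using C by (auto simp: chains_def A_def)
      then have "\<Union>C \<in> A" using dominated_linear_graph_Union False chainsD2[OF C]
        by (fastforce simp: A_def)
      then show ?thesis by blast
    qed
  qed
  then obtain G where "G \<in> A" and maximal: "\<And>G'. G' \<in> A \<Longrightarrow> G \<subseteq> G' \<Longrightarrow> G' = G"
    by blast
  then have G: "dominated_linear_graph p G" and Gx: "(x, p x) \<in> G" by (auto simp: A_def)
  have total: "\<exists>a. (v, a) \<in> G" for v
  proof (rule ccontr)
    assume "\<nexists>a. (v, a) \<in> G"
    then obtain G' where "dominated_linear_graph p G'" "G \<subset> G'"
      using dominated_linear_graph_extend[OF p G] by blast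
    then show False using maximal[of G'] Gx by (auto simp: A_def)
  qed
  show ?thesis by (rule that[OF G Gx total])
qed

lemma dominated_linear_graph_total_linear:
  assumes G: "dominated_linear_graph p G" and total: "\<And>v. \<exists>a. (v, a) \<in> G"
  obtains f where "linear f" "\<And>v. f v \<le> p v" "\<And>v a. (v, a) \<in> G \<longleftrightarrow> a = f v"
proof -
  have functional: "\<And>v a b. (v, a) \<in> G \<Longrightarrow> (v, b) \<in> G \<Longrightarrow> a = b"
    using G unfolding dominated_linear_graph_def by blast
  define f where "f v = (THE a. (v, a) \<in> G)" for v
  have graph_f: "(v, a) \<in> G \<longleftrightarrow> a = f v" for v a
    unfolding f_def using total[of v] functional by (metis theI)
  then have mem: "(v, f v) \<in> G" for v by simp
  show ?thesis
  proof (rule that)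
    show "linear f"
    proof (rule linearI)
      fix u w
      have "(u + w, f u + f w) \<in> G"
        using G mem[of u] mem[of w] unfolding dominated_linear_graph_def by blast
      then show "f (u + w) = f u + f w" using graph_f by simp
    next
      fix r u
      have "(r *\<^sub>R u, r * f u) \<in> G" using G mem[of u] unfolding dominated_linear_graph_def by blast
      then show "f (r *\<^sub>R u) = r *\<^sub>R f u" using graph_f by simp
    qed
    show "f v \<le> p v" for v
      using G mem[of v] unfolding dominated_linear_graph_def by blast
  qed (rule graph_f)
qed

theorem Hahn_Banach_sublinear:
  assumes "sublinear p"
  obtains f where "linear f" "\<And>v. f v \<le> p v" "f x = p x"
proof -
  obtain G where G: "dominated_linear_graph p G" "(x, p x) \<in> G" "\<And>v. \<exists>a. (v, a) \<in> G"
    using dominated_linear_graph_maximal[OF assms] by blast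
  obtain f where f: "linear f" "\<And>v. f v \<le> p v" and graph: "\<And>v a. (v, a) \<in> G \<longleftrightarrow> a = f v"
    using dominated_linear_graph_total_linear[OF G(1,3)] by blast
  show ?thesis using that[OF f] graph[of x "p x"] G(2) by simp
qed

section \<open>Continuous linear functionals on locally convex spaces\<close>

lemma tvs_continuous_on_scaleR_translate:
  assumes "tvs_ops_continuous TYPE('x::{real_vector, topological_space})"
  shows "continuous_on UNIV (\<lambda>z::'x. k *\<^sub>R (z + z0))"
proof -
  have add: "continuous_on UNIV (\<lambda>(x::'x, y::'x). x + y)"
    and scale: "continuous_on UNIV (\<lambda>(a::real, x::'x). a *\<^sub>R x)"
    using assms unfolding tvs_ops_continuous_def by auto
  have "continuous_on UNIV ((\<lambda>(x::'x, y::'x). x + y) \<circ> (\<lambda>z. (z, z0)))"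
    by (rule continuous_on_compose) (auto intro!: continuous_on_Pair continuous_on_id continuous_on_const
        intro: continuous_on_subset[OF add])
  then have translate: "continuous_on UNIV (\<lambda>z::'x. z + z0)" by (simp add: o_def)
  have "continuous_on UNIV ((\<lambda>(a::real, x::'x). a *\<^sub>R x) \<circ> (\<lambda>z. (k, z + z0)))"
    by (rule continuous_on_compose) (auto intro!: continuous_on_Pair translate continuous_on_const
        intro: continuous_on_subset[OF scale])
  then show ?thesis by (simp add: o_def)
qed

lemma tvs_continuous_on_scaleR_left:
  assumes "tvs_ops_continuous TYPE('x::{real_vector, topological_space})"
  shows "continuous_on UNIV (\<lambda>s::real. s *\<^sub>R (v::'x))"
proof -
  have scale: "continuous_on UNIV (\<lambda>(a::real, x::'x). a *\<^sub>R x)"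
    using assms unfolding tvs_ops_continuous_def by auto
  have "continuous_on UNIV ((\<lambda>(a::real, x::'x). a *\<^sub>R x) \<circ> (\<lambda>s. (s, v)))"
    by (rule continuous_on_compose) (auto intro!: continuous_on_Pair continuous_on_id continuous_on_const
        intro: continuous_on_subset[OF scale])
  then show ?thesis by (simp add: o_def)
qed

lemma open_vimage_continuous_on_UNIV:
  "continuous_on UNIV g \<Longrightarrow> open B \<Longrightarrow> open (g -` B)"
  using continuous_on_open_vimage[OF open_UNIV, of g] by auto

lemma tvs_open_nhd_absorbing:
  assumes "tvs_ops_continuous TYPE('x::{real_vector, topological_space})"
    and "open W" "0 \<in> W"
  obtains s where "s > 0" "s *\<^sub>R (v::'x) \<in> W"
proof -
  have "open ((\<lambda>s::real. s *\<^sub>R v) -` W)"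
    using open_vimage_continuous_on_UNIV[OF tvs_continuous_on_scaleR_left[OF assms(1)] assms(2)] .
  moreover have "0 \<in> (\<lambda>s::real. s *\<^sub>R v) -` W" using assms(3) by simp
  ultimately obtain d where d: "d > 0" "ball 0 d \<subseteq> (\<lambda>s::real. s *\<^sub>R v) -` W"
    unfolding open_contains_ball by blast
  then have "d / 2 \<in> (\<lambda>s::real. s *\<^sub>R v) -` W" by (simp add: subset_eq)
  then show ?thesis using that[of "d / 2"] d(1) by simp
qed

lemma linear_continuous_if_bounded_above_on_nhd:
  fixes f :: "'x::{real_vector, topological_space} \<Rightarrow> real"
  assumes tvs: "tvs_ops_continuous TYPE('x)" and f: "linear f"
    and W: "open W" "0 \<in> W" "\<And>v. v \<in> W \<Longrightarrow> f v \<le> 1"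
  shows "continuous_on UNIV f"
  unfolding continuous_on_topological
proof (intro ballI allI impI)
  fix z0 B assume "open B" "f z0 \<in> B"
  then obtain e where e: "e > 0" "ball (f z0) e \<subseteq> B" by (auto simp: open_contains_ball)
  define k where "k = 2 / e"
  have k: "k > 0" using e k_def by simp
  define A where "A = ((\<lambda>z. k *\<^sub>R (z + - z0)) -` W) \<inter> ((\<lambda>z. (- k) *\<^sub>R (z + - z0)) -` W)"
  have "open A" unfolding A_def
    by (intro open_Int open_vimage_continuous_on_UNIV[OF tvs_continuous_on_scaleR_translate[OF tvs]] W)
  moreover have "z0 \<in> A" using W by (simp add: A_def)
  moreover have "f z \<in> B" if "z \<in> A" for z
  proof -
    have "f (k *\<^sub>R (z + - z0)) \<le> 1" "f ((- k) *\<^sub>R (z + - z0)) \<le> 1"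
      using W(3) that by (auto simp: A_def)
    moreover have "f ((- k) *\<^sub>R (z + - z0)) = - f (k *\<^sub>R (z + - z0))"
      using f by (simp add: linear_scale linear_neg)
    moreover have "f (k *\<^sub>R (z + - z0)) = k * (f z - f z0)"
      using f by (simp add: linear_scale linear_diff)
    ultimately have "k * \<bar>f z - f z0\<bar> \<le> 1" by (simp add: abs_mult)
    then have "\<bar>f z - f z0\<bar> < e" using e k by (simp add: k_def field_simps)
    then show ?thesis using e by (auto simp: dist_real_def)
  qed
  ultimately show "\<exists>A. open A \<and> z0 \<in> A \<and> (\<forall>y\<in>UNIV. y \<in> A \<longrightarrow> f y \<in> B)" by blast
qed

definition minkowski_functional :: "'x::real_vector set \<Rightarrow> 'x \<Rightarrow> real" where
  "minkowski_functional W v = Inf {t. 0 < t \<and> inverse t *\<^sub>R v \<in> W}"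

lemma minkowski_functional_le:
  "0 < t \<Longrightarrow> inverse t *\<^sub>R v \<in> W \<Longrightarrow> minkowski_functional W v \<le> t"
  unfolding minkowski_functional_def by (rule cInf_lower) (auto intro: bdd_belowI[of _ 0])

lemma minkowski_functional_ge:
  assumes "0 < s" "s *\<^sub>R v \<in> W" and "\<And>t. 0 < t \<Longrightarrow> inverse t *\<^sub>R v \<in> W \<Longrightarrow> c \<le> t"
  shows "c \<le> minkowski_functional W v"
  unfolding minkowski_functional_def
proof (rule cInf_greatest)
  show "{t. 0 < t \<and> inverse t *\<^sub>R v \<in> W} \<noteq> {}" using assms(1,2) by (auto intro!: exI[of _ "inverse s"])
qed (use assms(3) in auto)

lemma minkowski_functional_add_le:
  assumes W: "convex W" and absorbing: "\<And>v. \<exists>s>0. s *\<^sub>R v \<in> W"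
  shows "minkowski_functional W (u + w) \<le> minkowski_functional W u + minkowski_functional W w"
proof -
  have sum: "minkowski_functional W (u + w) \<le> s + t"
    if s: "0 < s" "inverse s *\<^sub>R u \<in> W" and t: "0 < t" "inverse t *\<^sub>R w \<in> W" for s t
  proof (rule minkowski_functional_le)
    have "(s / (s + t)) *\<^sub>R (inverse s *\<^sub>R u) + (t / (s + t)) *\<^sub>R (inverse t *\<^sub>R w) \<in> W"
      using convexD[OF W s(2) t(2), of "s / (s + t)" "t / (s + t)"] s t
      by (simp add: add_divide_distrib[symmetric])
    moreover have "(s / (s + t)) *\<^sub>R (inverse s *\<^sub>R u) + (t / (s + t)) *\<^sub>R (inverse t *\<^sub>R w)
        = inverse (s + t) *\<^sub>R (u + w)"
    proof -
      have "s * inverse (s + t) * inverse s = inverse (s + t)"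
        "t * inverse (s + t) * inverse t = inverse (s + t)"
        using s t by (simp_all add: field_simps)
      then show ?thesis by (simp only: scaleR_scaleR scaleR_add_right divide_inverse mult.commute)
    qed
    ultimately show "inverse (s + t) *\<^sub>R (u + w) \<in> W" by simp
  qed (use s t in simp)
  obtain t0 where t0: "0 < t0" "t0 *\<^sub>R w \<in> W" using absorbing by blast
  obtain r0 where r0: "0 < r0" "r0 *\<^sub>R u \<in> W" using absorbing by blast
  have bound: "minkowski_functional W (u + w) - t \<le> minkowski_functional W u"
    if "0 < t" "inverse t *\<^sub>R w \<in> W" for t
    using r0 by (rule minkowski_functional_ge) (use sum that in force)
  have "minkowski_functional W (u + w) - minkowski_functional W u \<le> minkowski_functional W w"
    by (rule minkowski_functional_ge[OF t0]) (use bound in force)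
  then show ?thesis by simp
qed

lemma minkowski_functional_scaleR:
  assumes absorbing: "\<And>v. \<exists>s>0. s *\<^sub>R v \<in> W" and c: "c > 0"
  shows "minkowski_functional W (c *\<^sub>R v) = c * minkowski_functional W v"
proof -
  obtain s where s: "0 < s" "s *\<^sub>R v \<in> W" using absorbing by blast
  have "minkowski_functional W (c *\<^sub>R v) / c \<le> minkowski_functional W v"
  proof (rule minkowski_functional_ge[OF s])
    fix t assume t: "0 < t" "inverse t *\<^sub>R v \<in> W"
    have "inverse (c * t) *\<^sub>R c *\<^sub>R v = inverse t *\<^sub>R v" using c by simp
    then have "minkowski_functional W (c *\<^sub>R v) \<le> c * t"
      using minkowski_functional_le[of "c * t" "c *\<^sub>R v" W] c t by (metis mult_pos_pos)
    then show "minkowski_functional W (c *\<^sub>R v) / c \<le> t" using c by (simp add: field_simps)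
  qed
  moreover have "c * minkowski_functional W v \<le> minkowski_functional W (c *\<^sub>R v)"
  proof (rule minkowski_functional_ge[of "s / c"])
    show "0 < s / c" "(s / c) *\<^sub>R c *\<^sub>R v \<in> W" using s c by auto
  next
    fix t assume "0 < t" "inverse t *\<^sub>R c *\<^sub>R v \<in> W"
    then have "minkowski_functional W v \<le> t / c"
      using c by (intro minkowski_functional_le) (auto simp: field_simps)
    then show "c * minkowski_functional W v \<le> t" using c by (simp add: field_simps)
  qed
  ultimately show ?thesis using c by (simp add: field_simps)
qed

lemma minkowski_functional_sublinear:
  assumes "convex W" "\<And>v. \<exists>s>0. s *\<^sub>R v \<in> W"
  shows "sublinear (minkowski_functional W)"
  unfolding sublinear_def
  using minkowski_functional_add_le[OF assms] minkowski_functional_scaleR[OF assms(2)] by blast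

lemma minkowski_functional_ge_1:
  assumes "convex W" "0 \<in> W" "v \<notin> W" and "0 < s" "s *\<^sub>R v \<in> W"
  shows "1 \<le> minkowski_functional W v"
proof (rule minkowski_functional_ge[OF assms(4,5)], rule ccontr)
  fix t assume t: "0 < t" "inverse t *\<^sub>R v \<in> W" "\<not> 1 \<le> t"
  have "t *\<^sub>R (inverse t *\<^sub>R v) + (1 - t) *\<^sub>R 0 \<in> W"
    using convexD[OF assms(1) t(2) assms(2), of t "1 - t"] t by simp
  then show False using t assms(3) by simp
qed

lemma topdual_separates_zero:
  fixes x :: "'x::{real_vector, t1_space}"
  assumes tvs: "tvs_ops_continuous TYPE('x)" and lc: "locally_convex TYPE('x)" and "x \<noteq> 0"
  obtains f where "f \<in> topdual" "f x > 0"
proof -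
  obtain U where "open U" "0 \<in> U" "x \<notin> U" using t1_space[of 0 x] \<open>x \<noteq> 0\<close> by metis
  then obtain W where W: "open W" "convex W" "0 \<in> W" "x \<notin> W"
    using lc unfolding locally_convex_def by blast
  have absorbing: "\<exists>s>0. s *\<^sub>R v \<in> W" for v
    using tvs_open_nhd_absorbing[OF tvs W(1,3)] by metis
  obtain f where f: "linear f" "\<And>v. f v \<le> minkowski_functional W v"
    and fx: "f x = minkowski_functional W x"
    using Hahn_Banach_sublinear[OF minkowski_functional_sublinear[OF W(2) absorbing]] by metis
  have "f v \<le> 1" if "v \<in> W" for v
    using f(2)[of v] minkowski_functional_le[of 1 v W] that by simp
  then have "continuous_on UNIV f"
    using linear_continuous_if_bounded_above_on_nhd[OF tvs f(1) W(1,3)] by blast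
  moreover have "1 \<le> f x"
    using absorbing[of x] minkowski_functional_ge_1[OF W(2,3,4)] fx by auto
  ultimately show ?thesis using that f(1) by (simp add: topdual_def)
qed

section \<open>Sigma-finite countably additive set functions\<close>

lemma sigma_finite_ca_measure_Un:
  assumes "sigma_algebra \<Omega> \<Sigma>" "sigma_finite_ca_measure \<Omega> \<Sigma> \<mu>"
    and "A \<in> \<Sigma>" "B \<in> \<Sigma>" "A \<inter> B = {}"
  shows "\<mu> (A \<union> B) = \<mu> A + \<mu> B"
proof -
  interpret sigma_algebra \<Omega> \<Sigma> by (rule assms(1))
  have "range (binaryset A B) \<subseteq> \<Sigma>"
    using assms(3,4) by (simp add: range_binaryset_eq)
  moreover have "disjoint_family (binaryset A B)"
    using assms(5) by (auto simp: disjoint_family_on_def binaryset_def)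
  ultimately have "(\<lambda>n. \<mu> (binaryset A B n)) sums \<mu> (A \<union> B)"
    using assms(2) unfolding sigma_finite_ca_measure_def UN_binaryset_eq[symmetric] by blast
  moreover have "(\<lambda>n. \<mu> (binaryset A B n)) sums (\<mu> A + \<mu> B)"
    using assms(2) by (intro binaryset_sums) (simp add: sigma_finite_ca_measure_def)
  ultimately show ?thesis by (rule sums_unique2)
qed

lemma sigma_finite_ca_measure_finite_subset:
  assumes "sigma_algebra \<Omega> \<Sigma>" "sigma_finite_ca_measure \<Omega> \<Sigma> \<mu>"
    and "A \<in> \<Sigma>" "B \<in> \<Sigma>" "A \<subseteq> B" "\<mu> B < \<infinity>"
  shows "\<mu> A < \<infinity>"
proof -
  interpret sigma_algebra \<Omega> \<Sigma> by (rule assms(1))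
  have "B - A \<in> \<Sigma>" using assms(3,4) by blast
  then have "\<mu> B = \<mu> A + \<mu> (B - A)" "\<mu> (B - A) \<noteq> -\<infinity>"
    using sigma_finite_ca_measure_Un[OF assms(1,2,3), of "B - A"] assms(2,5)
    by (auto simp: Un_absorb1 sigma_finite_ca_measure_def)
  then show ?thesis using assms(6) by (cases "\<mu> A"; cases "\<mu> (B - A)") auto
qed

lemma sigma_finite_ca_measure_disjoint_finite_cover:
  assumes "sigma_algebra \<Omega> \<Sigma>" "sigma_finite_ca_measure \<Omega> \<Sigma> \<mu>"
  obtains C :: "nat \<Rightarrow> 'a set"
  where "range C \<subseteq> \<Sigma>" "disjoint_family C" "(\<Union>k. C k) = \<Omega>"
    and "\<And>k A. A \<in> \<Sigma> \<Longrightarrow> A \<subseteq> C k \<Longrightarrow> \<mu> A < \<infinity>"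
proof -
  interpret sigma_algebra \<Omega> \<Sigma> by (rule assms(1))
  obtain B :: "nat \<Rightarrow> 'a set" where B: "range B \<subseteq> \<Sigma>" "(\<Union>k. B k) = \<Omega>" "\<And>k. \<mu> (B k) < \<infinity>"
    using assms(2) unfolding sigma_finite_ca_measure_def by blast
  show ?thesis
  proof (rule that[of "disjointed B"])
    show "range (disjointed B) \<subseteq> \<Sigma>"
      using range_disjointed_sets[OF B(1)] .
    show "disjoint_family (disjointed B)" by (rule disjoint_family_disjointed)
    show "(\<Union>k. disjointed B k) = \<Omega>" using B(2) by (simp add: UN_disjointed_eq)
    show "\<mu> A < \<infinity>" if "A \<in> \<Sigma>" "A \<subseteq> disjointed B k" for k A
      using sigma_finite_ca_measure_finite_subset[OF assms that(1) _ _ B(3)] B(1) that(2)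
        disjointed_subset[of B k] by blast
  qed
qed

lemma sums_ereal_ge_const_infinity:
  fixes f :: "nat \<Rightarrow> ereal"
  assumes sums: "f sums s" and "0 < e" and ge: "\<And>n. ereal e \<le> f n"
  shows "s = \<infinity>"
proof (rule ereal_top)
  fix B
  obtain N :: nat where N: "B < real N * e" using ex_less_of_nat_mult[OF \<open>0 < e\<close>] by blast
  have "ereal (real N * e) \<le> (\<Sum>i<n. f i)" if "n \<ge> N" for n
  proof -
    have "ereal (real N * e) \<le> ereal (real n * e)" using that \<open>0 < e\<close> by (simp add: mult_right_mono)
    also have "\<dots> = (\<Sum>i<n. ereal e)" by simp
    also have "\<dots> \<le> (\<Sum>i<n. f i)" using ge by (rule sum_mono)
    finally show ?thesis .
  qed
  then have "ereal (real N * e) \<le> s"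
    using sums unfolding sums_def by (intro LIMSEQ_le_const) auto
  moreover have "ereal B \<le> ereal (real N * e)" using N by simp
  ultimately show "ereal B \<le> s" by (rule order_trans[rotated])
qed

lemma finite_disjoint_measure_gt:
  assumes "sigma_algebra \<Omega> \<Sigma>" "sigma_finite_ca_measure \<Omega> \<Sigma> \<mu>"
    and F: "F \<subseteq> \<Sigma>" "disjoint F" and C: "C \<in> \<Sigma>" "\<And>A. A \<in> \<Sigma> \<Longrightarrow> A \<subseteq> C \<Longrightarrow> \<mu> A < \<infinity>"
    and "e > 0"
  shows "finite {E\<in>F. ereal e < \<mu> (E \<inter> C)}"
proof (rule ccontr)
  interpret sigma_algebra \<Omega> \<Sigma> by (rule assms(1))
  assume "infinite {E\<in>F. ereal e < \<mu> (E \<inter> C)}"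
  then obtain g :: "nat \<Rightarrow> 'a set" where g: "inj g" "range g \<subseteq> {E\<in>F. ereal e < \<mu> (E \<inter> C)}"
    using infinite_countable_subset by metis
  define A where "A n = g n \<inter> C" for n
  have A: "range A \<subseteq> \<Sigma>"
    using g(2) F(1) C(1) by (auto simp: A_def)
  have "disjoint_family A"
    unfolding disjoint_family_on_def
  proof (intro ballI impI)
    fix m n :: nat assume "m \<noteq> n"
    then have "g m \<noteq> g n" using g(1) by (meson injD)
    moreover have "g m \<in> F" "g n \<in> F" using g(2) by auto
    ultimately show "A m \<inter> A n = {}" using F(2) by (auto simp: A_def disjoint_def)
  qed
  then have sums: "(\<lambda>n. \<mu> (A n)) sums \<mu> (\<Union>n. A n)"
    using assms(2) A unfolding sigma_finite_ca_measure_def by blast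
  have "ereal e \<le> \<mu> (A n)" for n
    using g(2) rangeI[of g n] unfolding A_def by (blast intro: less_imp_le)
  then have "\<mu> (\<Union>n. A n) = \<infinity>" using sums_ereal_ge_const_infinity[OF sums \<open>e > 0\<close>] by blast
  moreover have "(\<Union>n. A n) \<in> \<Sigma>" using A by (rule countable_UN)
  then have "\<mu> (\<Union>n. A n) < \<infinity>" by (rule C(2)) (auto simp: A_def)
  ultimately show False by simp
qed

lemma sigma_finite_ca_measure_pos_Int:
  fixes C :: "nat \<Rightarrow> 'a set"
  assumes "sigma_algebra \<Omega> \<Sigma>" "sigma_finite_ca_measure \<Omega> \<Sigma> \<mu>"
    and C: "range C \<subseteq> \<Sigma>" "disjoint_family C" "(\<Union>k. C k) = \<Omega>"
    and E: "E \<in> \<Sigma>" "\<mu> E > 0"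
  obtains k where "\<mu> (E \<inter> C k) > 0"
proof (rule ccontr)
  interpret sigma_algebra \<Omega> \<Sigma> by (rule assms(1))
  assume "\<not> thesis"
  then have nonpos: "\<mu> (E \<inter> C k) \<le> 0" for k using that by (meson not_le)
  have "range (\<lambda>k. E \<inter> C k) \<subseteq> \<Sigma>" using E(1) C(1) by auto
  moreover have "disjoint_family (\<lambda>k. E \<inter> C k)" using C(2) by (auto simp: disjoint_family_on_def)
  moreover have "(\<Union>k. E \<inter> C k) = E" using C(3) E(1) sets_into_space by auto
  ultimately have "(\<lambda>k. \<mu> (E \<inter> C k)) sums \<mu> E"
    using assms(2) unfolding sigma_finite_ca_measure_def by metis
  then have "\<mu> E \<le> 0"
    unfolding sums_def by (rule LIMSEQ_le_const2) (auto intro: sum_nonpos nonpos)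
  then show False using E(2) by simp
qed

lemma ereal_pos_gt_inverse_Suc:
  assumes "0 < (x::ereal)"
  obtains m where "ereal (inverse (real (Suc m))) < x"
proof (cases x)
  case (real r)
  then obtain n where "n > 0" "inverse (real n) < r" using assms ex_inverse_of_nat_less by auto
  then show ?thesis using real that[of "n - 1"] by simp
qed (use assms that[of 0] in auto)

theorem countable_disjoint_measure_pos:
  assumes "sigma_algebra \<Omega> \<Sigma>" "sigma_finite_ca_measure \<Omega> \<Sigma> \<mu>"
    and F: "F \<subseteq> \<Sigma>" "disjoint F"
  shows "countable {E\<in>F. \<mu> E > 0}"
proof -
  obtain C :: "nat \<Rightarrow> 'a set" where C: "range C \<subseteq> \<Sigma>" "disjoint_family C" "(\<Union>k. C k) = \<Omega>"
    and finite_on_C: "\<And>k A. A \<in> \<Sigma> \<Longrightarrow> A \<subseteq> C k \<Longrightarrow> \<mu> A < \<infinity>"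
    using sigma_finite_ca_measure_disjoint_finite_cover[OF assms(1,2)] by blast
  define big where "big k m = {E\<in>F. ereal (inverse (real (Suc m))) < \<mu> (E \<inter> C k)}" for k m
  have "{E\<in>F. \<mu> E > 0} \<subseteq> (\<Union>k. \<Union>m. big k m)"
  proof
    fix E assume "E \<in> {E\<in>F. \<mu> E > 0}"
    then have "E \<in> F" "E \<in> \<Sigma>" "\<mu> E > 0" using F(1) by auto
    then obtain k m where "ereal (inverse (real (Suc m))) < \<mu> (E \<inter> C k)"
      using sigma_finite_ca_measure_pos_Int[OF assms(1,2) C] ereal_pos_gt_inverse_Suc by metis
    then show "E \<in> (\<Union>k. \<Union>m. big k m)" using \<open>E \<in> F\<close> by (auto simp: big_def)
  qed
  moreover have "finite (big k m)" for k m
    unfolding big_def using C(1) finite_on_C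
    by (intro finite_disjoint_measure_gt[OF assms(1,2) F]) auto
  then have "countable (\<Union>k. \<Union>m. big k m)" by (simp add: countable_finite)
  ultimately show ?thesis by (rule countable_subset)
qed

section \<open>The countable chain condition\<close>

lemma openin_weak_star_topology_positive:
  fixes x :: "'x::{real_vector, topological_space}"
  shows "openin weak_star_topology ({h. 0 < h x} \<inter> topdual)"
proof -
  have "continuous_map (powertop_real UNIV) euclideanreal (\<lambda>h::'x \<Rightarrow> real. h x)"
    by (rule continuous_map_product_projection) (rule UNIV_I)
  from openin_continuous_map_preimage[OF this, of "{0<..}"]
  have "openin (powertop_real UNIV) {h::'x \<Rightarrow> real. 0 < h x}" by simp
  then show ?thesis unfolding weak_star_topology_def openin_subtopology by blast
qed

lemma countable_separating_subset_topdual: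
  assumes tvs: "tvs_ops_continuous TYPE('x::{real_vector, t1_space})"
    and lc: "locally_convex TYPE('x)"
    and sep: "separable_top (weak_star_topology :: ('x \<Rightarrow> real) topology)"
  obtains D where "countable D" "D \<subseteq> topdual" "\<And>x::'x. x \<noteq> 0 \<Longrightarrow> \<exists>g\<in>D. 0 < g x"
proof -
  let ?T = "weak_star_topology :: ('x \<Rightarrow> real) topology"
  have topspace: "topspace ?T = topdual" by (simp add: weak_star_topology_def)
  obtain D where D: "countable D" "D \<subseteq> topspace ?T" "?T closure_of D = topspace ?T"
    using sep unfolding separable_top_def by blast
  have "\<exists>g\<in>D. 0 < g x" if "x \<noteq> 0" for x
  proof -
    obtain f where f: "f \<in> topdual" "f x > 0" using topdual_separates_zero[OF tvs lc \<open>x \<noteq> 0\<close>] .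
    then have "f \<in> ?T closure_of D" using D(3) topspace by simp
    then have "\<forall>U. f \<in> U \<and> openin ?T U \<longrightarrow> (\<exists>g. g \<in> D \<and> g \<in> U)"
      unfolding in_closure_of by simp
    from this[rule_format, of "{h. 0 < h x} \<inter> topdual"] show ?thesis
      using f openin_weak_star_topology_positive[of x] by blast
  qed
  then show ?thesis using that D(1,2) topspace by simp
qed

lemma supp_fun_pos: "x \<in> C \<Longrightarrow> 0 < f x \<Longrightarrow> 0 < supp_fun f C"
  unfolding supp_fun_def by (rule order.strict_trans2[OF _ SUP_upper]) auto

lemma multimeasure_supp_fun_pos:
  assumes "multimeasure \<Omega> \<Sigma> M" "E \<in> \<Sigma> - null_sets_mm \<Sigma> M"
    and separating: "\<And>x. x \<noteq> 0 \<Longrightarrow> \<exists>g\<in>D. 0 < g x"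
  shows "\<exists>g\<in>D. 0 < supp_fun g (M E)"
proof -
  have "M E \<noteq> {}" "M E \<noteq> {0}"
    using assms(1,2) by (auto simp: multimeasure_def cX_def null_sets_mm_def)
  then obtain x where x: "x \<in> M E" "x \<noteq> 0" by blast
  obtain g where "g \<in> D" "0 < g x" using separating[OF x(2)] by blast
  with supp_fun_pos[OF x(1)] show ?thesis by blast
qed

theorem theorem3p5:
  fixes \<Omega> :: "'a set" and \<Sigma> :: "'a set set"
    and M :: "'a set \<Rightarrow> 'x::{real_vector, t2_space} set"
  assumes "sigma_algebra \<Omega> \<Sigma>"
    and "tvs_ops_continuous TYPE('x)"
    and "locally_convex TYPE('x)"
    and "separable_top (weak_star_topology :: ('x \<Rightarrow> real) topology)"
    and "multimeasure \<Omega> \<Sigma> M"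
  shows "countable_chain_condition \<Sigma> M"
  unfolding countable_chain_condition_def
proof (intro allI impI)
  fix F assume F: "F \<subseteq> \<Sigma> - null_sets_mm \<Sigma> M \<and> disjoint F"
  then have "F \<subseteq> \<Sigma>" "disjoint F" by auto
  obtain D where D: "countable D" "D \<subseteq> topdual"
    and separating: "\<And>x::'x. x \<noteq> 0 \<Longrightarrow> \<exists>g\<in>D. 0 < g x"
    using countable_separating_subset_topdual[OF assms(2-4)] by blast
  have "F \<subseteq> (\<Union>g\<in>D. {E\<in>F. 0 < supp_fun g (M E)})"
  proof
    fix E assume "E \<in> F"
    then have "E \<in> \<Sigma> - null_sets_mm \<Sigma> M" using F by blast
    then show "E \<in> (\<Union>g\<in>D. {E\<in>F. 0 < supp_fun g (M E)})"
      using multimeasure_supp_fun_pos[OF assms(5) _ separating] \<open>E \<in> F\<close> by blast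
  qed
  moreover have "countable (\<Union>g\<in>D. {E\<in>F. 0 < supp_fun g (M E)})"
  proof (rule countable_UN[OF D(1)])
    fix g assume "g \<in> D"
    then have "sigma_finite_ca_measure \<Omega> \<Sigma> (\<lambda>E. supp_fun g (M E))"
      using D(2) assms(5) by (auto simp: multimeasure_def)
    then show "countable {E\<in>F. 0 < supp_fun g (M E)}"
      using countable_disjoint_measure_pos[OF assms(1) _ \<open>F \<subseteq> \<Sigma>\<close> \<open>disjoint F\<close>] by blast
  qed
  ultimately show "countable F" by (rule countable_subset)
qed

end
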